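(* Let $d\in\mathbb N$ and let $(G_n)$ be a sequence of finite graphs with maximum degree at most $d$ and $\lim_{n\to\infty}|G_n|=\infty$. Then the following are equivalent: (1) $(G_n)$ is BS-convergent; (2) $(G_n)$ is $\mathrm{FO}^{\mathrm{local}}_1$-convergent; (3) $(G_n)$ is $\mathrm{FO}^{\mathrm{local}}$-convergent.
   Context: For a first-order graph formula $\phi$ with free variables among $x_1,\dots,x_p$ and a finite graph $G$, $\langle\phi,G\rangle=|\{(v_1,\dots,v_p)\in V(G)^p:G\models\phi(v_1,\dots,v_p)\}|/|G|^p$; for a set $X$ of formulas, $(G_n)$ is $X$-convergent if $\langle\phi,G_n\rangle$ converges for all $\phi\in X$. A formula $\phi$ with free variables among $x_1,\dots,x_p$ is $r$-local if for every graph $G$ and $v_1,\dots,v_p\in V(G)$, $G\models\phi(v_1,\dots,v_p)$ iff $G[N_r(v_1,\dots,v_p)]\models\phi(v_1,\dots,v_p)$, where $G[N_r(v_1,\dots,v_p)]$ is the subgraph induced by the vertices at distance at most $r$ from some $v_i$; $\phi$ is local if it is $r$-local for some $r$. $\mathrm{FO}^{\mathrm{local}}$ is the set of local formulas and $\mathrm{FO}^{\mathrm{local}}_p$ the set of local formulas with free variables among $x_1,\dots,x_p$. $(G_n)$ is BS-convergent if for every integer $r$ and every finite rooted connected graph $(F,o)$ with maximum degree at most $d$ the limit $\lim_{n\to\infty}|\{v: (B_{G_n}(v,r),v)\cong(F,o)\}|/|G_n|$ exists, where $B_G(v,r)$ is the subgraph induced by vertices at distance at most $r$ from $v$ and $\cong$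 is isomorphism of rooted graphs. *)

theory Defs
  imports Complex_Main "HOL-Library.FuncSet"
begin

record graph =
  verts :: "nat set"
  adj :: "nat \<Rightarrow> nat \<Rightarrow> bool"

definition is_graph :: "graph \<Rightarrow> bool" where
  "is_graph G \<longleftrightarrow> finite (verts G)
     \<and> (\<forall>x y. adj G x y \<longrightarrow> x \<in> verts G \<and> y \<in> verts G)
     \<and> (\<forall>x y. adj G x y \<longrightarrow> adj G y x)
     \<and> (\<forall>x. \<not> adj G x x)"

definition max_degree_le :: "nat \<Rightarrow> graph \<Rightarrow> bool" where
  "max_degree_le d G \<longleftrightarrow> (\<forall>v \<in> verts G. card {u \<in> verts G. adj G v u} \<le> d)"

definition induced :: "graph \<Rightarrow> nat set \<Rightarrow> graph" where
  "induced G S = \<lparr> verts = verts G \<inter> S,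
                   adj = (\<lambda>x y. adj G x y \<and> x \<in> S \<and> y \<in> S) \<rparr>"

fun ball :: "graph \<Rightarrow> nat \<Rightarrow> nat \<Rightarrow> nat set" where
  "ball G 0 x = {x} \<inter> verts G"
| "ball G (Suc k) x = ball G k x \<union> {y \<in> verts G. \<exists>z \<in> ball G k x. adj G z y}"

text \<open>N_r(v_1,...,v_p) for a tuple given as an assignment on indices 0..p-1.\<close>
definition nbhd :: "graph \<Rightarrow> nat \<Rightarrow> nat \<Rightarrow> (nat \<Rightarrow> nat) \<Rightarrow> nat set" where
  "nbhd G r p v = (\<Union>i<p. ball G r (v i))"

definition connected_graph :: "graph \<Rightarrow> bool" where
  "connected_graph G \<longleftrightarrow> (\<forall>x \<in> verts G. \<forall>y \<in> verts G. \<exists>k. y \<in> ball G k x)"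

definition rooted_iso :: "graph \<Rightarrow> nat \<Rightarrow> graph \<Rightarrow> nat \<Rightarrow> bool" where
  "rooted_iso G o1 H o2 \<longleftrightarrow> (\<exists>f. bij_betw f (verts G) (verts H) \<and> f o1 = o2
      \<and> (\<forall>x \<in> verts G. \<forall>y \<in> verts G. adj H (f x) (f y) \<longleftrightarrow> adj G x y))"

datatype fo =
    FEq nat nat
  | FAdj nat nat
  | FNot fo
  | FAnd fo fo
  | FOr fo fo
  | FEx nat fo

fun free_vars :: "fo \<Rightarrow> nat set" where
  "free_vars (FEq x y) = {x, y}"
| "free_vars (FAdj x y) = {x, y}"
| "free_vars (FNot \<phi>) = free_vars \<phi>"
| "free_vars (FAnd \<phi> \<psi>) = free_vars \<phi> \<union> free_vars \<psi>"
| "free_vars (FOr \<phi> \<psi>) = free_vars \<phi> \<union> free_vars \<psi>"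
| "free_vars (FEx x \<phi>) = free_vars \<phi> - {x}"

fun sat :: "graph \<Rightarrow> (nat \<Rightarrow> nat) \<Rightarrow> fo \<Rightarrow> bool" where
  "sat G \<sigma> (FEq x y) \<longleftrightarrow> \<sigma> x = \<sigma> y"
| "sat G \<sigma> (FAdj x y) \<longleftrightarrow> adj G (\<sigma> x) (\<sigma> y)"
| "sat G \<sigma> (FNot \<phi>) \<longleftrightarrow> \<not> sat G \<sigma> \<phi>"
| "sat G \<sigma> (FAnd \<phi> \<psi>) \<longleftrightarrow> sat G \<sigma> \<phi> \<and> sat G \<sigma> \<psi>"
| "sat G \<sigma> (FOr \<phi> \<psi>) \<longleftrightarrow> sat G \<sigma> \<phi> \<or> sat G \<sigma> \<psi>"
| "sat G \<sigma> (FEx x \<phi>) \<longleftrightarrow> (\<exists>v \<in> verts G. sat G (\<sigma>(x := v)) \<phi>)"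

text \<open>Free variables x_1..x_p are represented by indices 0..p-1.\<close>
definition density :: "nat \<Rightarrow> fo \<Rightarrow> graph \<Rightarrow> real" where
  "density p \<phi> G =
     real (card {v \<in> {0..<p} \<rightarrow>\<^sub>E verts G. sat G v \<phi>}) / real (card (verts G)) ^ p"

definition r_local :: "nat \<Rightarrow> nat \<Rightarrow> fo \<Rightarrow> bool" where
  "r_local p r \<phi> \<longleftrightarrow> (\<forall>G v. is_graph G \<longrightarrow> v \<in> {0..<p} \<rightarrow>\<^sub>E verts G \<longrightarrow>
      (sat G v \<phi> \<longleftrightarrow> sat (induced G (nbhd G r p v)) v \<phi>))"

definition FO_local_p :: "nat \<Rightarrow> fo set" where
  "FO_local_p p = {\<phi>. free_vars \<phi> \<subseteq> {0..<p} \<and> (\<exists>r. r_local p r \<phi>)}"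

definition FO_local1_convergent :: "(nat \<Rightarrow> graph) \<Rightarrow> bool" where
  "FO_local1_convergent Gs \<longleftrightarrow> (\<forall>\<phi> \<in> FO_local_p 1. convergent (\<lambda>n. density 1 \<phi> (Gs n)))"

text \<open>FO^local is the union over p of FO^local_p; each formula is evaluated with a p
  witnessing that its free variables are among x_1..x_p.\<close>
definition FO_local_convergent :: "(nat \<Rightarrow> graph) \<Rightarrow> bool" where
  "FO_local_convergent Gs \<longleftrightarrow>
     (\<forall>p. \<forall>\<phi> \<in> FO_local_p p. convergent (\<lambda>n. density p \<phi> (Gs n)))"

definition BS_convergent :: "nat \<Rightarrow> (nat \<Rightarrow> graph) \<Rightarrow> bool" where
  "BS_convergent d Gs \<longleftrightarrow>
     (\<forall>r F o'. is_graph F \<and> o' \<in> verts F \<and> connected_graph F \<and> max_degree_le d F \<longrightarrow>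
        convergent (\<lambda>n. real (card {v \<in> verts (Gs n).
                rooted_iso (induced (Gs n) (ball (Gs n) r v)) v F o'})
              / real (card (verts (Gs n)))))"

end

theory Submission
  imports Defs "HOL-Library.Disjoint_Sets"
begin

text \<open>Satisfaction of an \<open>r\<close>-local formula at a tuple whose entries are pairwise more than
  \<open>2 r + 1\<close> apart depends only on the isomorphism types of the rooted \<open>r\<close>-balls around the
  entries. In graphs of maximum degree \<open>d\<close> there are finitely many such types, and all but
  \<open>O(|G|^(p - 1))\<close> of the \<open>p\<close>-tuples are far apart in this sense. Hence the density of an
  \<open>r\<close>-local formula with \<open>p\<close> free variables differs by \<open>O(1 / |G|)\<close> from a fixed polynomial in
  the frequencies of the \<open>r\<close>-ball types, which converge if the sequence is BS-convergent.
  Conversely, for every rooted graph \<open>F\<close>, "the \<open>r\<close>-ball around \<open>x\<^sub>1\<close> is isomorphic to \<open>F\<close>" is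
  expressed by an \<open>r\<close>-local formula with one free variable, whose density is the BS frequency
  of \<open>F\<close>.\<close>

lemma ball_subset_verts: "ball G k x \<subseteq> verts G"
  by (induction k) auto

lemma ball_mono: "k \<le> l \<Longrightarrow> ball G k x \<subseteq> ball G l x"
  by (induction l) (auto simp: le_Suc_eq)

lemma center_in_ball: "x \<in> verts G \<Longrightarrow> x \<in> ball G k x"
  using ball_mono[of 0 k G x] by auto

lemma finite_ball: "is_graph G \<Longrightarrow> finite (ball G k x)"
  by (rule finite_subset[OF ball_subset_verts]) (simp add: is_graph_def)

lemma ball_add: "z \<in> ball G (m + k) y \<longleftrightarrow> (\<exists>w \<in> ball G m y. z \<in> ball G k w)"
proof (induction k arbitrary: z)
  case 0
  then show ?case using ball_subset_verts by auto
next
  case (Suc k)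
  have "z \<in> ball G (m + Suc k) y \<longleftrightarrow>
      z \<in> ball G (m + k) y \<or> (z \<in> verts G \<and> (\<exists>u \<in> ball G (m + k) y. adj G u z))"
    by simp
  also have "\<dots> \<longleftrightarrow> (\<exists>w \<in> ball G m y. z \<in> ball G k w \<or>
      (z \<in> verts G \<and> (\<exists>u \<in> ball G k w. adj G u z)))"
    using Suc.IH by blast
  finally show ?case by simp
qed

lemma ball_trans: "w \<in> ball G m y \<Longrightarrow> z \<in> ball G k w \<Longrightarrow> z \<in> ball G (m + k) y"
  using ball_add by blast

lemma ball_sym:
  assumes "is_graph G"
  shows "z \<in> ball G k y \<longleftrightarrow> y \<in> ball G k z"
proof (induction k arbitrary: y z)
  case 0
  then show ?case by auto
next
  case (Suc k)
  have one: "z \<in> ball G 1 w \<longleftrightarrow> w \<in> ball G 1 z" for z w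
    using assms unfolding is_graph_def by auto
  have "z \<in> ball G (Suc k) y \<longleftrightarrow> (\<exists>w \<in> ball G k y. z \<in> ball G 1 w)"
    using ball_add[of z G k 1 y] by simp
  also have "\<dots> \<longleftrightarrow> (\<exists>w \<in> ball G 1 z. y \<in> ball G k w)"
    using Suc one by blast
  also have "\<dots> \<longleftrightarrow> y \<in> ball G (Suc k) z"
    using ball_add[of y G 1 k z] by simp
  finally show ?case .
qed

lemma card_ball_le:
  assumes "is_graph G" "max_degree_le d G"
  shows "card (ball G k x) \<le> (d + 1) ^ k"
proof (induction k)
  case 0
  then show ?case by (simp add: card_le_Suc0_iff_eq)
next
  case (Suc k)
  let ?N = "\<lambda>z. {u \<in> verts G. adj G z u}"
  have fin: "finite (ball G k x)" using finite_ball[OF assms(1)] .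
  have "ball G (Suc k) x \<subseteq> ball G k x \<union> (\<Union>z\<in>ball G k x. ?N z)" by auto
  moreover have "finite (\<Union>z\<in>ball G k x. ?N z)"
    using fin assms(1) unfolding is_graph_def by auto
  ultimately have "card (ball G (Suc k) x) \<le> card (ball G k x) + card (\<Union>z\<in>ball G k x. ?N z)"
    by (meson card_Un_le card_mono fin finite_UnI order_trans)
  moreover have "card (\<Union>z\<in>ball G k x. ?N z) \<le> card (ball G k x) * d"
  proof -
    have "card (\<Union>z\<in>ball G k x. ?N z) \<le> (\<Sum>z\<in>ball G k x. card (?N z))"
      by (rule card_UN_le[OF fin])
    also have "\<dots> \<le> (\<Sum>z\<in>ball G k x. d)"
      using assms(2) ball_subset_verts unfolding max_degree_le_def by (intro sum_mono) blast
    finally show ?thesis by simp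
  qed
  moreover have "card (ball G k x) * (d + 1) \<le> (d + 1) ^ k * (d + 1)"
    using Suc.IH by (rule mult_right_mono) simp
  ultimately show ?case by (simp add: power_Suc2 algebra_simps)
qed

lemma verts_induced [simp]: "verts (induced G S) = verts G \<inter> S"
  by (simp add: induced_def)

lemma adj_induced [simp]: "adj (induced G S) x y \<longleftrightarrow> adj G x y \<and> x \<in> S \<and> y \<in> S"
  by (simp add: induced_def)

lemma verts_Int_ball [simp]: "verts G \<inter> ball G r x = ball G r x"
  using ball_subset_verts by auto

lemma is_graph_induced: "is_graph G \<Longrightarrow> is_graph (induced G S)"
  unfolding is_graph_def by auto

lemma max_degree_le_induced:
  assumes "is_graph G" "max_degree_le d G"
  shows "max_degree_le d (induced G S)"
  unfolding max_degree_le_def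
proof
  fix v assume v: "v \<in> verts (induced G S)"
  have "card {u \<in> verts (induced G S). adj (induced G S) v u} \<le> card {u \<in> verts G. adj G v u}"
    using assms(1) unfolding is_graph_def by (intro card_mono) auto
  also have "\<dots> \<le> d" using assms(2) v unfolding max_degree_le_def by auto
  finally show "card {u \<in> verts (induced G S). adj (induced G S) v u} \<le> d" .
qed

lemma ball_induced_ball [simp]: "ball (induced G (ball G r x)) r x = ball G r x"
proof -
  have "ball G k x \<subseteq> ball (induced G (ball G r x)) k x" if "k \<le> r" for k
    using that
  proof (induction k)
    case 0
    then show ?case using center_in_ball[of x G r] by auto
  next
    case (Suc k)
    have "ball G (Suc k) x \<subseteq> ball G r x" "ball G k x \<subseteq> ball G r x"
      using ball_mono[OF Suc.prems] ball_mono[OF Suc_leD[OF Suc.prems]] by blast+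
    then show ?case using Suc by auto
  qed
  moreover have "ball (induced G S) k x \<subseteq> ball G k x" for S k
    by (induction k) auto
  ultimately show ?thesis by blast
qed

lemma induced_idem [simp]: "induced (induced G S) S = induced G S"
  by (simp add: induced_def)

lemma connected_induced_ball:
  assumes "is_graph G"
  shows "connected_graph (induced G (ball G r x))"
  unfolding connected_graph_def
proof (intro ballI)
  let ?H = "induced G (ball G r x)"
  fix a b assume "a \<in> verts ?H" "b \<in> verts ?H"
  then have "x \<in> ball ?H r a" "b \<in> ball ?H r x"
    using ball_sym[OF is_graph_induced[OF assms]] by auto
  then show "\<exists>k. b \<in> ball ?H k a" by (blast intro: ball_trans)
qed

section \<open>Rooted isomorphism types of balls\<close>

lemma rooted_iso_sym:
  assumes "rooted_iso G o1 H o2" "o1 \<in> verts G"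
  shows "rooted_iso H o2 G o1"
proof -
  obtain f where f: "bij_betw f (verts G) (verts H)" "f o1 = o2"
    "\<forall>x \<in> verts G. \<forall>y \<in> verts G. adj H (f x) (f y) \<longleftrightarrow> adj G x y"
    using assms(1) unfolding rooted_iso_def by blast
  let ?g = "inv_into (verts G) f"
  have g: "bij_betw ?g (verts H) (verts G)" using bij_betw_inv_into[OF f(1)] .
  moreover have "?g o2 = o1" using f assms(2) bij_betw_inv_into_left by fastforce
  moreover have "\<forall>x \<in> verts H. \<forall>y \<in> verts H. adj G (?g x) (?g y) \<longleftrightarrow> adj H x y"
    using f g bij_betw_inv_into_right[OF f(1)] by (metis bij_betwE)
  ultimately show ?thesis unfolding rooted_iso_def by blast
qed

lemma rooted_iso_trans:
  assumes "rooted_iso G o1 H o2" "rooted_iso H o2 K o3"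
  shows "rooted_iso G o1 K o3"
proof -
  obtain f where f: "bij_betw f (verts G) (verts H)" "f o1 = o2"
    "\<forall>x \<in> verts G. \<forall>y \<in> verts G. adj H (f x) (f y) \<longleftrightarrow> adj G x y"
    using assms(1) unfolding rooted_iso_def by blast
  obtain g where g: "bij_betw g (verts H) (verts K)" "g o2 = o3"
    "\<forall>x \<in> verts H. \<forall>y \<in> verts H. adj K (g x) (g y) \<longleftrightarrow> adj H x y"
    using assms(2) unfolding rooted_iso_def by blast
  have "bij_betw (g \<circ> f) (verts G) (verts K)" using f(1) g(1) by (rule bij_betw_trans)
  moreover have "\<forall>x \<in> verts G. \<forall>y \<in> verts G. adj K ((g \<circ> f) x) ((g \<circ> f) y) \<longleftrightarrow> adj G x y"
    using f g by (auto dest: bij_betwE)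
  ultimately show ?thesis using f(2) g(2) unfolding rooted_iso_def by auto
qed

lemma sat_iso_invariant:
  assumes f: "bij_betw f (verts G) (verts H)"
    and adj_f: "\<forall>x \<in> verts G. \<forall>y \<in> verts G. adj H (f x) (f y) \<longleftrightarrow> adj G x y"
    and \<sigma>: "\<forall>x \<in> free_vars \<phi>. \<sigma> x \<in> verts G \<and> \<sigma>' x = f (\<sigma> x)"
  shows "sat G \<sigma> \<phi> \<longleftrightarrow> sat H \<sigma>' \<phi>"
  using \<sigma>
proof (induction \<phi> arbitrary: \<sigma> \<sigma>')
  case (FEq x y)
  then show ?case using f by (auto simp: bij_betw_def inj_on_def)
next
  case (FAdj x y)
  then show ?case using adj_f by auto
next
  case (FNot \<phi>)
  then show ?case by auto
next
  case (FAnd \<phi>1 \<phi>2)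
  then show ?case by (metis UnCI free_vars.simps(4) sat.simps(4))
next
  case (FOr \<phi>1 \<phi>2)
  then show ?case by (metis UnCI free_vars.simps(5) sat.simps(5))
next
  case (FEx x \<phi>)
  have IH: "sat G (\<sigma>(x := v)) \<phi> \<longleftrightarrow> sat H (\<sigma>'(x := f v)) \<phi>" if "v \<in> verts G" for v
    using FEx that by (intro FEx.IH) auto
  have "f ` verts G = verts H" using f by (simp add: bij_betw_def)
  then have "(\<exists>w \<in> verts H. sat H (\<sigma>'(x := w)) \<phi>) \<longleftrightarrow> (\<exists>v \<in> verts G. sat H (\<sigma>'(x := f v)) \<phi>)"
    by (auto simp flip: \<open>f ` verts G = verts H\<close>)
  then show ?case using IH by simp
qed

text \<open>The rooted isomorphism type of an \<open>r\<close>-ball is represented by the set of its codes: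
  rooted graphs on \<open>{0..<m}\<close> with \<open>m \<le> M\<close>, given by an edge set and a root. The bound \<open>M\<close>
  makes the set of types finite; for \<open>M \<ge> (d + 1) ^ r\<close> every \<open>r\<close>-ball of a graph of maximum
  degree \<open>d\<close> has a code.\<close>

type_synonym rooted_code = "nat \<times> (nat \<times> nat) set \<times> nat"

definition code_graph :: "rooted_code \<Rightarrow> graph" where
  "code_graph c = \<lparr> verts = {0..<fst c}, adj = (\<lambda>a b. (a, b) \<in> fst (snd c)) \<rparr>"

definition code_root :: "rooted_code \<Rightarrow> nat" where
  "code_root c = snd (snd c)"

definition codes :: "nat \<Rightarrow> rooted_code set" where
  "codes M = {(m, E, q). m \<le> M \<and> E \<subseteq> {0..<m} \<times> {0..<m} \<and> q < m}"

definition ball_type :: "nat \<Rightarrow> nat \<Rightarrow> graph \<Rightarrow> nat \<Rightarrow> rooted_code set" where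
  "ball_type r M G x =
     {c \<in> codes M. rooted_iso (induced G (ball G r x)) x (code_graph c) (code_root c)}"

lemma finite_codes: "finite (codes M)"
proof -
  have "codes M \<subseteq> {0..M} \<times> Pow ({0..<M} \<times> {0..<M}) \<times> {0..<M}"
    unfolding codes_def by auto
  then show ?thesis by (rule finite_subset) auto
qed

lemma ball_type_subset_codes: "ball_type r M G x \<subseteq> codes M"
  unfolding ball_type_def by auto

lemma ex_code_rooted_iso:
  assumes fin: "finite (verts H)" and M: "card (verts H) \<le> M" and o: "o' \<in> verts H"
  shows "\<exists>c \<in> codes M. rooted_iso H o' (code_graph c) (code_root c)"
proof -
  let ?V = "verts H"
  obtain h where h: "bij_betw h ?V {0..<card ?V}" using ex_bij_betw_finite_nat[OF fin] by blast
  define E where "E = (\<lambda>(a, b). (h a, h b)) ` {(a, b). a \<in> ?V \<and> b \<in> ?V \<and> adj H a b}"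
  define c where "c = (card ?V, E, h o')"
  have hV: "h a \<in> {0..<card ?V}" if "a \<in> ?V" for a using h that by (meson bij_betwE)
  have inj: "inj_on h ?V" using h by (simp add: bij_betw_def)
  have "c \<in> codes M" unfolding c_def codes_def E_def using M hV o by auto
  moreover have "(h a, h b) \<in> E \<longleftrightarrow> adj H a b" if "a \<in> ?V" "b \<in> ?V" for a b
    using that inj unfolding E_def by (auto dest: inj_onD)
  then have "rooted_iso H o' (code_graph c) (code_root c)"
    using h unfolding rooted_iso_def by (auto simp: code_graph_def code_root_def c_def)
  ultimately show ?thesis by blast
qed

lemma ball_type_eq_iff:
  assumes G: "is_graph G" and M: "card (ball G r x) \<le> M"
    and x: "x \<in> verts G" and y: "y \<in> verts G'"
  shows "ball_type r M G x = ball_type r M G' y \<longleftrightarrow>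
     rooted_iso (induced G (ball G r x)) x (induced G' (ball G' r y)) y"
proof
  assume eq: "ball_type r M G x = ball_type r M G' y"
  have "finite (verts (induced G (ball G r x)))" "x \<in> verts (induced G (ball G r x))"
    using finite_ball[OF G] center_in_ball[OF x] x by auto
  then obtain c where c: "c \<in> codes M"
      "rooted_iso (induced G (ball G r x)) x (code_graph c) (code_root c)"
    using ex_code_rooted_iso M by (metis verts_induced verts_Int_ball)
  then have "rooted_iso (induced G' (ball G' r y)) y (code_graph c) (code_root c)"
    using eq unfolding ball_type_def by auto
  then have "rooted_iso (code_graph c) (code_root c) (induced G' (ball G' r y)) y"
    by (rule rooted_iso_sym) (use y center_in_ball[OF y] in auto)
  then show "rooted_iso (induced G (ball G r x)) x (induced G' (ball G' r y)) y"
    using c(2) rooted_iso_trans by blast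
next
  assume iso: "rooted_iso (induced G (ball G r x)) x (induced G' (ball G' r y)) y"
  have iso': "rooted_iso (induced G' (ball G' r y)) y (induced G (ball G r x)) x"
    using iso by (rule rooted_iso_sym) (use x center_in_ball[OF x] in auto)
  show "ball_type r M G x = ball_type r M G' y"
    unfolding ball_type_def using rooted_iso_trans[OF iso] rooted_iso_trans[OF iso'] by blast
qed

section \<open>Far tuples\<close>

lemma ex_bij_betw_UN_glue:
  assumes disj: "disjoint_family_on B I" and disj': "disjoint_family_on B' I"
    and F: "\<And>i. i \<in> I \<Longrightarrow> bij_betw (F i) (B i) (B' i)"
  obtains f where "bij_betw f (\<Union>i\<in>I. B i) (\<Union>i\<in>I. B' i)"
    and "\<And>i x. i \<in> I \<Longrightarrow> x \<in> B i \<Longrightarrow> f x = F i x"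
proof
  define f where "f x = F (SOME i. i \<in> I \<and> x \<in> B i) x" for x
  show f_eq: "f x = F i x" if "i \<in> I" "x \<in> B i" for i x
  proof -
    have "(SOME i. i \<in> I \<and> x \<in> B i) = i"
      using that disj unfolding disjoint_family_on_def by (rule_tac some_equality) auto
    then show ?thesis unfolding f_def by simp
  qed
  have img: "f ` (\<Union>i\<in>I. B i) = (\<Union>i\<in>I. B' i)"
  proof -
    have "f ` (\<Union>i\<in>I. B i) = (\<Union>i\<in>I. F i ` B i)"
      using f_eq by (auto simp: image_UN cong: image_cong)
    then show ?thesis using F by (simp add: bij_betw_def)
  qed
  have "inj_on f (\<Union>i\<in>I. B i)"
  proof (rule inj_onI)
    fix x y assume "x \<in> (\<Union>i\<in>I. B i)" "y \<in> (\<Union>i\<in>I. B i)" and e: "f x = f y"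
    then obtain i j where i: "i \<in> I" "x \<in> B i" and j: "j \<in> I" "y \<in> B j" by blast
    have "f x \<in> B' i" "f y \<in> B' j" using f_eq i j F by (metis bij_betwE)+
    then have "f x \<in> B' i \<inter> B' j" using e by simp
    then have "i = j" using disjoint_family_onD[OF disj' i(1) j(1)] by blast
    then show "x = y" using e f_eq i j F by (metis bij_betw_def inj_onD)
  qed
  then show "bij_betw f (\<Union>i\<in>I. B i) (\<Union>i\<in>I. B' i)" using img by (simp add: bij_betw_def)
qed

definition far :: "graph \<Rightarrow> nat \<Rightarrow> nat \<Rightarrow> (nat \<Rightarrow> nat) \<Rightarrow> bool" where
  "far G r p v \<longleftrightarrow> (\<forall>i<p. \<forall>j<p. i \<noteq> j \<longrightarrow> v j \<notin> ball G (2 * r + 1) (v i))"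

lemma far_balls_disjoint:
  assumes G: "is_graph G" and "far G r p v"
  shows "disjoint_family_on (\<lambda>i. ball G r (v i)) {..<p}"
  unfolding disjoint_family_on_def
proof (intro ballI impI)
  fix i j assume ij: "i \<in> {..<p}" "j \<in> {..<p}" "i \<noteq> j"
  show "ball G r (v i) \<inter> ball G r (v j) = {}"
  proof (rule ccontr)
    assume "ball G r (v i) \<inter> ball G r (v j) \<noteq> {}"
    then obtain a where "a \<in> ball G r (v i)" "v j \<in> ball G r a" using ball_sym[OF G] by blast
    then have "v j \<in> ball G (r + r) (v i)" by (rule ball_trans)
    moreover have "r + r \<le> 2 * r + 1" by simp
    ultimately have "v j \<in> ball G (2 * r + 1) (v i)" using ball_mono by blast
    then show False using assms(2) ij unfolding far_def lessThan_iff by blast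
  qed
qed

lemma far_balls_not_adj:
  assumes G: "is_graph G" and "far G r p v" and ij: "i < p" "j < p" "i \<noteq> j"
    and a: "a \<in> ball G r (v i)" and b: "b \<in> ball G r (v j)"
  shows "\<not> adj G a b"
proof
  assume "adj G a b"
  then have "b \<in> ball G 1 a" using G unfolding is_graph_def by auto
  moreover have "v j \<in> ball G r b" using b ball_sym[OF G] by blast
  ultimately have "v j \<in> ball G (r + 1 + r) (v i)" using a by (blast intro: ball_trans)
  moreover have "r + 1 + r = 2 * r + 1" by simp
  ultimately show False using assms(2) ij unfolding far_def by metis
qed

lemma rooted_iso_induced_ballsE:
  assumes "rooted_iso (induced G (ball G r x)) x (induced G' (ball G' r y)) y"
  obtains f where "bij_betw f (ball G r x) (ball G' r y)" "f x = y"
    "\<forall>a \<in> ball G r x. \<forall>b \<in> ball G r x. adj G' (f a) (f b) \<longleftrightarrow> adj G a b"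
proof -
  obtain f where f: "bij_betw f (ball G r x) (ball G' r y)" "f x = y"
    "\<forall>a \<in> ball G r x. \<forall>b \<in> ball G r x. adj (induced G' (ball G' r y)) (f a) (f b) \<longleftrightarrow> adj G a b"
    using assms unfolding rooted_iso_def by auto
  moreover have "f a \<in> ball G' r y" if "a \<in> ball G r x" for a
    using bij_betwE[OF f(1)] that by blast
  ultimately show ?thesis using that by auto
qed

lemma ex_iso_nbhd_far:
  assumes G: "is_graph G" and G': "is_graph G'"
    and far_v: "far G r p v" and far_w: "far G' r p w" and v: "\<forall>i<p. v i \<in> verts G"
    and iso: "\<forall>i<p. rooted_iso (induced G (ball G r (v i))) (v i)
                                (induced G' (ball G' r (w i))) (w i)"
  obtains f where "bij_betw f (nbhd G r p v) (nbhd G' r p w)" and "\<forall>i<p. f (v i) = w i"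
    and "\<forall>x \<in> nbhd G r p v. \<forall>y \<in> nbhd G r p v. adj G' (f x) (f y) \<longleftrightarrow> adj G x y"
proof -
  let ?B = "\<lambda>i. ball G r (v i)" and ?B' = "\<lambda>i. ball G' r (w i)"
  have "\<forall>i \<in> {..<p}. \<exists>f. bij_betw f (?B i) (?B' i) \<and> f (v i) = w i
      \<and> (\<forall>x \<in> ?B i. \<forall>y \<in> ?B i. adj G' (f x) (f y) \<longleftrightarrow> adj G x y)"
  proof
    fix i assume "i \<in> {..<p}"
    with iso have "rooted_iso (induced G (?B i)) (v i) (induced G' (?B' i)) (w i)" by simp
    then obtain f where "bij_betw f (?B i) (?B' i)" "f (v i) = w i"
      "\<forall>x \<in> ?B i. \<forall>y \<in> ?B i. adj G' (f x) (f y) \<longleftrightarrow> adj G x y"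
      by (rule rooted_iso_induced_ballsE)
    then show "\<exists>f. bij_betw f (?B i) (?B' i) \<and> f (v i) = w i
      \<and> (\<forall>x \<in> ?B i. \<forall>y \<in> ?B i. adj G' (f x) (f y) \<longleftrightarrow> adj G x y)" by blast
  qed
  then obtain F where F: "\<And>i. i < p \<Longrightarrow> bij_betw (F i) (?B i) (?B' i)"
      "\<And>i. i < p \<Longrightarrow> F i (v i) = w i"
      "\<And>i x y. i < p \<Longrightarrow> x \<in> ?B i \<Longrightarrow> y \<in> ?B i \<Longrightarrow> adj G' (F i x) (F i y) \<longleftrightarrow> adj G x y"
    by (metis lessThan_iff bchoice)
  obtain f where f: "bij_betw f (nbhd G r p v) (nbhd G' r p w)"
    and f_eq: "\<And>i x. i < p \<Longrightarrow> x \<in> ?B i \<Longrightarrow> f x = F i x"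
    using ex_bij_betw_UN_glue[OF far_balls_disjoint[OF G far_v] far_balls_disjoint[OF G' far_w], of F]
      F(1) unfolding nbhd_def by auto
  have "adj G' (f x) (f y) \<longleftrightarrow> adj G x y" if "x \<in> ?B i" "y \<in> ?B j" "i < p" "j < p" for x y i j
  proof (cases "i = j")
    case True
    then show ?thesis using that F(3) f_eq by simp
  next
    case False
    have "f x \<in> ?B' i" "f y \<in> ?B' j" using that f_eq F(1) by (metis bij_betwE)+
    then show ?thesis
      using far_balls_not_adj[OF G far_v] far_balls_not_adj[OF G' far_w] that False by metis
  qed
  moreover have "\<forall>i<p. f (v i) = w i" using f_eq F(2) center_in_ball v by metis
  ultimately show ?thesis using that f unfolding nbhd_def by blast
qed

lemma sat_far_tuples_iff:
  assumes G: "is_graph G" and G': "is_graph G'"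
    and loc: "r_local p r \<phi>" and fv: "free_vars \<phi> \<subseteq> {0..<p}"
    and v: "v \<in> {0..<p} \<rightarrow>\<^sub>E verts G" and w: "w \<in> {0..<p} \<rightarrow>\<^sub>E verts G'"
    and far_v: "far G r p v" and far_w: "far G' r p w"
    and iso: "\<forall>i<p. rooted_iso (induced G (ball G r (v i))) (v i)
                                (induced G' (ball G' r (w i))) (w i)"
  shows "sat G v \<phi> \<longleftrightarrow> sat G' w \<phi>"
proof -
  have v': "\<forall>i<p. v i \<in> verts G" using v by auto
  obtain f where f: "bij_betw f (nbhd G r p v) (nbhd G' r p w)" "\<forall>i<p. f (v i) = w i"
    "\<forall>x \<in> nbhd G r p v. \<forall>y \<in> nbhd G r p v. adj G' (f x) (f y) \<longleftrightarrow> adj G x y"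
    using ex_iso_nbhd_far[OF G G' far_v far_w v' iso] by blast
  have nbhd_verts: "verts H \<inter> nbhd H r p u = nbhd H r p u" for H u
    unfolding nbhd_def using ball_subset_verts by auto
  have "v x \<in> nbhd G r p v" if "x < p" for x
    using center_in_ball v' that unfolding nbhd_def by blast
  then have "sat (induced G (nbhd G r p v)) v \<phi> \<longleftrightarrow> sat (induced G' (nbhd G' r p w)) w \<phi>"
    using f fv bij_betwE[OF f(1)] by (intro sat_iso_invariant) (auto simp: nbhd_verts)
  then show ?thesis using loc G G' v w unfolding r_local_def by blast
qed

section \<open>From BS-convergence to local convergence\<close>

lemma card_PiE_profile_in:
  fixes \<tau> :: "'a \<Rightarrow> 'b" and A :: "('i \<Rightarrow> 'b) set"
  assumes I: "finite I" and V: "finite V" and A: "finite A" "A \<subseteq> extensional I"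
  shows "card {v \<in> I \<rightarrow>\<^sub>E V. restrict (\<lambda>i. \<tau> (v i)) I \<in> A}
       = (\<Sum>t\<in>A. \<Prod>i\<in>I. card {x \<in> V. \<tau> x = t i})"
proof -
  have fibre: "{v \<in> I \<rightarrow>\<^sub>E V. restrict (\<lambda>i. \<tau> (v i)) I = t} = PiE I (\<lambda>i. {x \<in> V. \<tau> x = t i})"
    if "t \<in> extensional I" for t
    using that by (auto simp: PiE_iff extensional_def fun_eq_iff)
  have "{v \<in> I \<rightarrow>\<^sub>E V. restrict (\<lambda>i. \<tau> (v i)) I \<in> A}
      = (\<Union>t\<in>A. {v \<in> I \<rightarrow>\<^sub>E V. restrict (\<lambda>i. \<tau> (v i)) I = t})"
    by blast
  then have "card {v \<in> I \<rightarrow>\<^sub>E V. restrict (\<lambda>i. \<tau> (v i)) I \<in> A}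
      = (\<Sum>t\<in>A. card {v \<in> I \<rightarrow>\<^sub>E V. restrict (\<lambda>i. \<tau> (v i)) I = t})"
    using A(1) I V by (simp, intro card_UN_disjoint) (auto simp: finite_PiE)
  also have "\<dots> = (\<Sum>t\<in>A. \<Prod>i\<in>I. card {x \<in> V. \<tau> x = t i})"
    using A(2) fibre by (intro sum.cong) (auto simp: card_PiE I)
  finally show ?thesis .
qed

lemma abs_card_diff_le:
  assumes "finite A" "finite B" "finite C" "A - C = B - C"
  shows "\<bar>real (card A) - real (card B)\<bar> \<le> real (card C)"
proof -
  have "card A = card (A - C) + card (A \<inter> C)" "card B = card (B - C) + card (B \<inter> C)"
    using assms card_Diff_subset_Int[of A C] card_Diff_subset_Int[of B C]
      card_mono[of A "A \<inter> C"] card_mono[of B "B \<inter> C"] by auto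
  moreover have "card (A \<inter> C) \<le> card C" "card (B \<inter> C) \<le> card C"
    using assms by (simp_all add: card_mono)
  moreover have "card (A - C) = card (B - C)" using assms(4) by simp
  ultimately show ?thesis by linarith
qed

lemma card_PiE_related_pair_le:
  assumes V: "finite V" and R: "\<And>x. x \<in> V \<Longrightarrow> R x \<subseteq> V" "\<And>x. x \<in> V \<Longrightarrow> card (R x) \<le> B"
    and ij: "i < p" "j < p" "i \<noteq> j"
  shows "card {v \<in> {0..<p} \<rightarrow>\<^sub>E V. v j \<in> R (v i)} \<le> card V ^ (p - 1) * B"
proof -
  let ?S = "{v \<in> {0..<p} \<rightarrow>\<^sub>E V. v j \<in> R (v i)}"
  let ?P = "({0..<p} - {j}) \<rightarrow>\<^sub>E V"
  define g where "g v = (restrict v ({0..<p} - {j}), v j)" for v :: "nat \<Rightarrow> 'a"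
  have "inj_on g ?S"
  proof (rule inj_onI)
    fix v v' assume v: "v \<in> ?S" and v': "v' \<in> ?S" and "g v = g v'"
    then have r: "restrict v ({0..<p} - {j}) = restrict v' ({0..<p} - {j})" "v j = v' j"
      by (simp_all add: g_def)
    have "v k = v' k" if "k \<in> {0..<p}" for k
      using fun_cong[OF r(1), of k] r(2) that by (cases "k = j") auto
    moreover have "v \<in> {0..<p} \<rightarrow>\<^sub>E V" "v' \<in> {0..<p} \<rightarrow>\<^sub>E V" using v v' by auto
    ultimately show "v = v'" by (intro PiE_ext) auto
  qed
  moreover have "g ` ?S \<subseteq> Sigma ?P (\<lambda>u. R (u i))"
  proof (rule image_subsetI)
    fix v assume v: "v \<in> ?S"
    have "restrict v ({0..<p} - {j}) \<in> ?P" using v by (auto simp: restrict_PiE_iff)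
    then show "g v \<in> Sigma ?P (\<lambda>u. R (u i))" using v ij by (simp add: g_def)
  qed
  moreover have uV: "u i \<in> V" if "u \<in> ?P" for u
    using PiE_mem[OF that, of i] ij by simp
  then have fin: "finite ?P" "\<forall>u \<in> ?P. finite (R (u i))"
    using V R(1) by (auto simp: finite_PiE intro: finite_subset)
  ultimately have "card ?S \<le> card (Sigma ?P (\<lambda>u. R (u i)))"
    by (intro card_inj_on_le) simp_all
  also have "\<dots> = (\<Sum>u\<in>?P. card (R (u i)))" using fin by simp
  also have "\<dots> \<le> (\<Sum>u\<in>?P. B)" using R(2) uV by (intro sum_mono) blast
  also have "\<dots> = card V ^ (p - 1) * B" using ij by (simp add: card_PiE)
  finally show ?thesis .
qed

lemma card_not_far_le:
  assumes G: "is_graph G" "max_degree_le d G"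
  shows "card {v \<in> {0..<p} \<rightarrow>\<^sub>E verts G. \<not> far G r p v}
       \<le> p * p * (card (verts G) ^ (p - 1) * (d + 1) ^ (2 * r + 1))"
proof -
  let ?V = "verts G" and ?X = "card (verts G) ^ (p - 1) * (d + 1) ^ (2 * r + 1)"
  let ?S = "\<lambda>i j. {v \<in> {0..<p} \<rightarrow>\<^sub>E ?V. i \<noteq> j \<and> v j \<in> ball G (2 * r + 1) (v i)}"
  have fin: "finite ?V" using G(1) by (simp add: is_graph_def)
  have bound: "card (?S i j) \<le> ?X" if "i < p" "j < p" for i j
    using card_PiE_related_pair_le[OF fin, of "\<lambda>x. ball G (2 * r + 1) x", OF ball_subset_verts
        card_ball_le[OF G] that] by (cases "i = j") auto
  have "{v \<in> {0..<p} \<rightarrow>\<^sub>E ?V. \<not> far G r p v} = (\<Union>i<p. \<Union>j<p. ?S i j)"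
    unfolding far_def by (auto simp del: ball.simps)
  then have "card {v \<in> {0..<p} \<rightarrow>\<^sub>E ?V. \<not> far G r p v} \<le> (\<Sum>i<p. card (\<Union>j<p. ?S i j))"
    by (simp add: card_UN_le)
  also have "\<dots> \<le> (\<Sum>i<p. \<Sum>j<p. card (?S i j))"
    by (intro sum_mono card_UN_le) simp
  also have "\<dots> \<le> (\<Sum>i<p. \<Sum>j<p. ?X)"
    using bound by (intro sum_mono) auto
  finally show ?thesis by simp
qed

lemma not_far_density_le:
  assumes G: "is_graph G" "max_degree_le d G" and N: "0 < card (verts G)"
  shows "real (card {v \<in> {0..<p} \<rightarrow>\<^sub>E verts G. \<not> far G r p v}) / real (card (verts G)) ^ p
       \<le> real (p * p * (d + 1) ^ (2 * r + 1)) / real (card (verts G))"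
proof (cases p)
  case 0
  then show ?thesis by (simp add: far_def)
next
  case (Suc q)
  let ?C = "card {v \<in> {0..<p} \<rightarrow>\<^sub>E verts G. \<not> far G r p v}"
  let ?N = "real (card (verts G))" and ?B = "real ((d + 1) ^ (2 * r + 1))"
  have "real ?C \<le> real (p * p * (card (verts G) ^ q * (d + 1) ^ (2 * r + 1)))"
    using card_not_far_le[OF G, of p r] Suc by (intro of_nat_mono) simp
  also have "\<dots> = real p * real p * (?N ^ q * ?B)" by simp
  finally have "real ?C / ?N ^ p \<le> real p * real p * (?N ^ q * ?B) / ?N ^ p"
    by (rule divide_right_mono) simp
  also have "\<dots> = real p * real p * ?B / ?N" using N Suc by (simp add: field_simps)
  finally show ?thesis by simp
qed

lemma convergent_if_dist_le_inverse:
  fixes a b :: "nat \<Rightarrow> real" and N :: "nat \<Rightarrow> nat"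
  assumes b: "convergent b" and N: "filterlim N at_top sequentially"
    and dist: "\<And>n. 0 < N n \<Longrightarrow> \<bar>a n - b n\<bar> \<le> c / real (N n)"
  shows "convergent a"
proof -
  have N': "filterlim (\<lambda>n. real (N n)) at_top sequentially"
    using filterlim_compose[OF filterlim_real_sequentially N] by (simp add: o_def)
  have "eventually (\<lambda>n. 1 \<le> N n) sequentially"
    using N by (simp add: filterlim_at_top)
  then have "eventually (\<lambda>n. 0 < N n) sequentially"
    by eventually_elim simp
  moreover have "norm (a n - b n) \<le> norm (c / real (N n)) * 1" if "0 < N n" for n
    using dist[OF that] abs_ge_self[of "c / real (N n)"] by simp
  ultimately have "eventually (\<lambda>n. norm (a n - b n) \<le> norm (c / real (N n)) * 1) sequentially"
    by (simp add: eventually_mono)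
  moreover have "(\<lambda>n. c / real (N n)) \<longlonglongrightarrow> 0"
    by (rule tendsto_divide_0[OF tendsto_const filterlim_at_top_imp_at_infinity[OF N']])
  ultimately have "(\<lambda>n. a n - b n) \<longlonglongrightarrow> 0" by (rule tendsto_0_le[rotated])
  then have "(\<lambda>n. (a n - b n) + b n) \<longlonglongrightarrow> 0 + lim b"
    using b by (intro tendsto_add) (simp_all add: convergent_LIMSEQ_iff)
  then show ?thesis unfolding convergent_def by auto
qed

definition ball_type_freq :: "nat \<Rightarrow> nat \<Rightarrow> graph \<Rightarrow> rooted_code set \<Rightarrow> real" where
  "ball_type_freq r M G a = real (card {x \<in> verts G. ball_type r M G x = a}) / real (card (verts G))"

lemma ball_type_freq_convergent:
  assumes gr: "\<And>n. is_graph (Gs n)" and deg: "\<And>n. max_degree_le d (Gs n)"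
    and BS: "BS_convergent d Gs" and M: "(d + 1) ^ r \<le> M"
  shows "convergent (\<lambda>n. ball_type_freq r M (Gs n) a)"
proof (cases "\<exists>k x. x \<in> verts (Gs k) \<and> ball_type r M (Gs k) x = a")
  case True
  then obtain k y where y: "y \<in> verts (Gs k)" "ball_type r M (Gs k) y = a" by blast
  let ?F = "induced (Gs k) (ball (Gs k) r y)"
  have "ball_type r M (Gs n) x = a \<longleftrightarrow> rooted_iso (induced (Gs n) (ball (Gs n) r x)) x ?F y"
    if "x \<in> verts (Gs n)" for n x
  proof -
    have "card (ball (Gs n) r x) \<le> M" using card_ball_le[OF gr deg] M by (rule le_trans)
    from ball_type_eq_iff[OF gr this that y(1)] y(2) show ?thesis by simp
  qed
  then have freq_eq: "{x \<in> verts (Gs n). ball_type r M (Gs n) x = a}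
      = {x \<in> verts (Gs n). rooted_iso (induced (Gs n) (ball (Gs n) r x)) x ?F y}" for n
    by blast
  have "is_graph ?F" "y \<in> verts ?F" "connected_graph ?F" "max_degree_le d ?F"
    using is_graph_induced[OF gr] y(1) center_in_ball[OF y(1)] connected_induced_ball[OF gr]
      max_degree_le_induced[OF gr deg] by auto
  then show ?thesis using BS unfolding BS_convergent_def ball_type_freq_def freq_eq by blast
next
  case False
  then have empty: "{x \<in> verts (Gs n). ball_type r M (Gs n) x = a} = {}" for n by blast
  show ?thesis unfolding ball_type_freq_def empty by (simp add: convergent_const)
qed

definition ball_profile :: "nat \<Rightarrow> nat \<Rightarrow> graph \<Rightarrow> nat \<Rightarrow> (nat \<Rightarrow> nat) \<Rightarrow> nat \<Rightarrow> rooted_code set"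
  where "ball_profile r M G p v = (\<lambda>i\<in>{0..<p}. ball_type r M G (v i))"

definition sat_profiles :: "nat \<Rightarrow> nat \<Rightarrow> nat \<Rightarrow> nat \<Rightarrow> fo \<Rightarrow> (nat \<Rightarrow> rooted_code set) set"
  where "sat_profiles d r M p \<phi> = {t \<in> {0..<p} \<rightarrow>\<^sub>E Pow (codes M). \<exists>G w. is_graph G
     \<and> max_degree_le d G \<and> w \<in> {0..<p} \<rightarrow>\<^sub>E verts G \<and> far G r p w \<and> ball_profile r M G p w = t
     \<and> sat G w \<phi>}"

lemma ball_profile_in_PiE_codes: "ball_profile r M G p v \<in> {0..<p} \<rightarrow>\<^sub>E Pow (codes M)"
  using ball_type_subset_codes by (auto simp: ball_profile_def)

lemma finite_sat_profiles: "finite (sat_profiles d r M p \<phi>)"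
  unfolding sat_profiles_def
  by (intro finite_Collect_conjI disjI1) (simp add: finite_PiE finite_codes)

lemma sat_profiles_subset_extensional: "sat_profiles d r M p \<phi> \<subseteq> extensional {0..<p}"
  unfolding sat_profiles_def by (auto simp: PiE_iff)

lemma sat_far_iff_profile_in_sat_profiles:
  assumes G: "is_graph G" "max_degree_le d G" and M: "(d + 1) ^ r \<le> M"
    and loc: "r_local p r \<phi>" and fv: "free_vars \<phi> \<subseteq> {0..<p}"
    and v: "v \<in> {0..<p} \<rightarrow>\<^sub>E verts G" and far_v: "far G r p v"
  shows "sat G v \<phi> \<longleftrightarrow> ball_profile r M G p v \<in> sat_profiles d r M p \<phi>"
proof
  assume "sat G v \<phi>"
  then show "ball_profile r M G p v \<in> sat_profiles d r M p \<phi>"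
    unfolding sat_profiles_def using G v far_v ball_profile_in_PiE_codes by blast
next
  assume "ball_profile r M G p v \<in> sat_profiles d r M p \<phi>"
  then obtain G' w where G': "is_graph G'" "max_degree_le d G'" and w: "w \<in> {0..<p} \<rightarrow>\<^sub>E verts G'"
    and far_w: "far G' r p w" and prof: "ball_profile r M G' p w = ball_profile r M G p v"
    and sat_w: "sat G' w \<phi>"
    unfolding sat_profiles_def by blast
  have "rooted_iso (induced G (ball G r (v i))) (v i) (induced G' (ball G' r (w i))) (w i)"
    if i: "i < p" for i
  proof -
    have "ball_type r M G (v i) = ball_type r M G' (w i)"
      using fun_cong[OF prof, of i] i by (simp add: ball_profile_def)
    moreover have "card (ball G r (v i)) \<le> M" using card_ball_le[OF G] M by (rule le_trans)
    moreover have "v i \<in> verts G" "w i \<in> verts G'" using v w i by auto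
    ultimately show ?thesis using ball_type_eq_iff[OF G(1)] by blast
  qed
  then show "sat G v \<phi>"
    using sat_far_tuples_iff[OF G(1) G'(1) loc fv v w far_v far_w] sat_w by blast
qed

lemma density_approx_by_ball_type_freqs:
  assumes G: "is_graph G" "max_degree_le d G" and N: "0 < card (verts G)"
    and M: "(d + 1) ^ r \<le> M" and loc: "r_local p r \<phi>" and fv: "free_vars \<phi> \<subseteq> {0..<p}"
  shows "\<bar>density p \<phi> G - (\<Sum>t\<in>sat_profiles d r M p \<phi>. \<Prod>i\<in>{0..<p}. ball_type_freq r M G (t i))\<bar>
       \<le> real (p * p * (d + 1) ^ (2 * r + 1)) / real (card (verts G))"
proof -
  let ?T = "{0..<p} \<rightarrow>\<^sub>E verts G" and ?N = "real (card (verts G))"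
  let ?Sat = "{v \<in> ?T. sat G v \<phi>}"
  let ?Prof = "{v \<in> ?T. ball_profile r M G p v \<in> sat_profiles d r M p \<phi>}"
  let ?Near = "{v \<in> ?T. \<not> far G r p v}"
  have fin: "finite (verts G)" using G(1) by (simp add: is_graph_def)
  have "?Sat - ?Near = ?Prof - ?Near"
    using sat_far_iff_profile_in_sat_profiles[OF G M loc fv] by auto
  then have near: "\<bar>real (card ?Sat) - real (card ?Prof)\<bar> \<le> real (card ?Near)"
    using fin by (intro abs_card_diff_le) (auto simp: finite_PiE)
  have "(\<Sum>t\<in>sat_profiles d r M p \<phi>. \<Prod>i\<in>{0..<p}. ball_type_freq r M G (t i))
      = real (card ?Prof) / ?N ^ p"
    using card_PiE_profile_in[OF finite_atLeastLessThan fin finite_sat_profiles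
        sat_profiles_subset_extensional, where \<tau> = "ball_type r M G"]
    by (simp add: ball_type_freq_def ball_profile_def prod_dividef sum_divide_distrib)
  moreover have "density p \<phi> G = real (card ?Sat) / ?N ^ p"
    by (simp add: density_def)
  ultimately have "\<bar>density p \<phi> G - (\<Sum>t\<in>sat_profiles d r M p \<phi>. \<Prod>i\<in>{0..<p}. ball_type_freq r M G (t i))\<bar>
      \<le> real (card ?Near) / ?N ^ p"
    using N near by (simp add: diff_divide_distrib[symmetric] abs_divide divide_right_mono)
  also have "\<dots> \<le> real (p * p * (d + 1) ^ (2 * r + 1)) / ?N"
    by (rule not_far_density_le[OF G N])
  finally show ?thesis .
qed

lemma FO_local_density_convergent:
  assumes gr: "\<And>n. is_graph (Gs n)" and deg: "\<And>n. max_degree_le d (Gs n)"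
    and lim: "filterlim (\<lambda>n. card (verts (Gs n))) at_top sequentially"
    and BS: "BS_convergent d Gs" and \<phi>: "\<phi> \<in> FO_local_p p"
  shows "convergent (\<lambda>n. density p \<phi> (Gs n))"
proof -
  obtain r where loc: "r_local p r \<phi>" and fv: "free_vars \<phi> \<subseteq> {0..<p}"
    using \<phi> unfolding FO_local_p_def by blast
  define M where "M = (d + 1) ^ r"
  define g where
    "g n = (\<Sum>t\<in>sat_profiles d r M p \<phi>. \<Prod>i\<in>{0..<p}. ball_type_freq r M (Gs n) (t i))" for n
  have "(\<lambda>n. ball_type_freq r M (Gs n) a) \<longlonglongrightarrow> lim (\<lambda>n. ball_type_freq r M (Gs n) a)" for a
    using ball_type_freq_convergent[OF gr deg BS, of r M a] unfolding M_def
    by (simp add: convergent_LIMSEQ_iff)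
  then have "g \<longlonglongrightarrow> (\<Sum>t\<in>sat_profiles d r M p \<phi>. \<Prod>i\<in>{0..<p}. lim (\<lambda>n. ball_type_freq r M (Gs n) (t i)))"
    unfolding g_def by (intro tendsto_sum tendsto_prod)
  then have "convergent g" unfolding convergent_def by blast
  moreover note lim
  moreover have "\<bar>density p \<phi> (Gs n) - g n\<bar> \<le> real (p * p * (d + 1) ^ (2 * r + 1)) / real (card (verts (Gs n)))"
    if "0 < card (verts (Gs n))" for n
    unfolding g_def M_def using density_approx_by_ball_type_freqs[OF gr deg that _ loc fv] by simp
  ultimately show ?thesis by (rule convergent_if_dist_le_inverse)
qed

section \<open>Local formulas describing balls\<close>

text \<open>\<open>fo_dist_le b k x y\<close> says that \<open>y\<close> is at distance at most \<open>k\<close> from \<open>x\<close>; it quantifies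
  over the variables \<open>b, \<dots>, b + k - 1\<close>, which must differ from \<open>x\<close> and \<open>y\<close>.\<close>

fun fo_dist_le :: "nat \<Rightarrow> nat \<Rightarrow> nat \<Rightarrow> nat \<Rightarrow> fo" where
  "fo_dist_le b 0 x y = FEq x y"
| "fo_dist_le b (Suc k) x y =
     FOr (fo_dist_le b k x y) (FEx (b + k) (FAnd (fo_dist_le b k x (b + k)) (FAdj (b + k) y)))"

lemma free_vars_fo_dist_le: "free_vars (fo_dist_le b k x y) \<subseteq> {x, y}"
  by (induction k arbitrary: y) auto

lemma sat_fo_dist_le:
  assumes "x < b" "y < b \<or> b + k \<le> y" "\<sigma> x \<in> verts G" "\<sigma> y \<in> verts G"
  shows "sat G \<sigma> (fo_dist_le b k x y) \<longleftrightarrow> \<sigma> y \<in> ball G k (\<sigma> x)"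
  using assms
proof (induction k arbitrary: \<sigma> y)
  case 0
  then show ?case by auto
next
  case (Suc k)
  have step: "sat G (\<sigma>(b + k := u)) (fo_dist_le b k x (b + k)) \<longleftrightarrow> u \<in> ball G k (\<sigma> x)"
    if "u \<in> verts G" for u
    using Suc.IH[of "b + k" "\<sigma>(b + k := u)"] Suc.prems that by (simp add: fun_upd_def)
  have "y < b \<or> b + k \<le> y" using Suc.prems(2) by auto
  then have "sat G \<sigma> (fo_dist_le b k x y) \<longleftrightarrow> \<sigma> y \<in> ball G k (\<sigma> x)"
    using Suc.IH Suc.prems by blast
  moreover have "y \<noteq> b + k" using Suc.prems by auto
  ultimately show ?case using Suc.prems step ball_subset_verts[of G k "\<sigma> x"] by auto
qed

text \<open>The empty conjunction and disjunction mention the variable \<open>0\<close>, which is free in every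
  formula built below anyway.\<close>

fun fo_conj :: "fo list \<Rightarrow> fo" where
  "fo_conj [] = FEq 0 0"
| "fo_conj (\<phi> # \<phi>s) = FAnd \<phi> (fo_conj \<phi>s)"

fun fo_disj :: "fo list \<Rightarrow> fo" where
  "fo_disj [] = FNot (FEq 0 0)"
| "fo_disj (\<phi> # \<phi>s) = FOr \<phi> (fo_disj \<phi>s)"

fun fo_exs :: "nat list \<Rightarrow> fo \<Rightarrow> fo" where
  "fo_exs [] \<phi> = \<phi>"
| "fo_exs (x # xs) \<phi> = FEx x (fo_exs xs \<phi>)"

lemma sat_fo_conj [simp]: "sat G \<sigma> (fo_conj \<phi>s) \<longleftrightarrow> (\<forall>\<phi> \<in> set \<phi>s. sat G \<sigma> \<phi>)"
  by (induction \<phi>s) auto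

lemma sat_fo_disj [simp]: "sat G \<sigma> (fo_disj \<phi>s) \<longleftrightarrow> (\<exists>\<phi> \<in> set \<phi>s. sat G \<sigma> \<phi>)"
  by (induction \<phi>s) auto

lemma free_vars_fo_conj: "free_vars (fo_conj \<phi>s) \<subseteq> {0} \<union> (\<Union>\<phi> \<in> set \<phi>s. free_vars \<phi>)"
  by (induction \<phi>s) auto

lemma free_vars_fo_disj: "free_vars (fo_disj \<phi>s) \<subseteq> {0} \<union> (\<Union>\<phi> \<in> set \<phi>s. free_vars \<phi>)"
  by (induction \<phi>s) auto

lemma free_vars_fo_exs [simp]: "free_vars (fo_exs xs \<phi>) = free_vars \<phi> - set xs"
  by (induction xs) auto

lemma sat_fo_exs:
  "sat G \<sigma> (fo_exs xs \<phi>) \<longleftrightarrow>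
   (\<exists>\<tau>. (\<forall>y. y \<notin> set xs \<longrightarrow> \<tau> y = \<sigma> y) \<and> (\<forall>y \<in> set xs. \<tau> y \<in> verts G) \<and> sat G \<tau> \<phi>)"
proof (induction xs arbitrary: \<sigma>)
  case Nil
  then show ?case by (simp flip: fun_eq_iff)
next
  case (Cons x xs)
  show ?case
  proof
    assume "sat G \<sigma> (fo_exs (x # xs) \<phi>)"
    then obtain u \<tau> where \<tau>: "u \<in> verts G" "\<forall>y. y \<notin> set xs \<longrightarrow> \<tau> y = (\<sigma>(x := u)) y"
      "\<forall>y \<in> set xs. \<tau> y \<in> verts G" "sat G \<tau> \<phi>"
      using Cons.IH by auto
    moreover have "\<tau> x \<in> verts G" using \<tau> by (cases "x \<in> set xs") auto
    ultimately show "\<exists>\<tau>. (\<forall>y. y \<notin> set (x # xs) \<longrightarrow> \<tau> y = \<sigma> y)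
        \<and> (\<forall>y \<in> set (x # xs). \<tau> y \<in> verts G) \<and> sat G \<tau> \<phi>"
      by (intro exI[of _ \<tau>]) auto
  next
    assume "\<exists>\<tau>. (\<forall>y. y \<notin> set (x # xs) \<longrightarrow> \<tau> y = \<sigma> y)
        \<and> (\<forall>y \<in> set (x # xs). \<tau> y \<in> verts G) \<and> sat G \<tau> \<phi>"
    then obtain \<tau> where \<tau>: "\<forall>y. y \<notin> set (x # xs) \<longrightarrow> \<tau> y = \<sigma> y"
      "\<forall>y \<in> set (x # xs). \<tau> y \<in> verts G" "sat G \<tau> \<phi>"
      by blast
    then have "sat G (\<sigma>(x := \<tau> x)) (fo_exs xs \<phi>)" using Cons.IH by auto
    then show "sat G \<sigma> (fo_exs (x # xs) \<phi>)" using \<tau>(2) by auto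
  qed
qed

text \<open>For an enumeration \<open>ws\<close> of a rooted graph \<open>F\<close> starting at its root, \<open>ball_iso_fo F ws r\<close>
  says that the variables \<open>0, \<dots>, length ws - 1\<close> can be chosen to enumerate the \<open>r\<close>-ball around
  variable \<open>0\<close> without repetition and with the adjacency pattern of \<open>ws\<close>.\<close>

definition fo_distinct :: "nat \<Rightarrow> fo" where
  "fo_distinct m = fo_conj [FNot (FEq j k). j \<leftarrow> [0..<m], k \<leftarrow> [0..<m], j \<noteq> k]"

definition fo_adj_pattern :: "graph \<Rightarrow> nat list \<Rightarrow> fo" where
  "fo_adj_pattern F ws = fo_conj [if adj F (ws ! j) (ws ! k) then FAdj j k else FNot (FAdj j k).
                              j \<leftarrow> [0..<length ws], k \<leftarrow> [0..<length ws]]"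

definition fo_within_ball :: "nat \<Rightarrow> nat \<Rightarrow> fo" where
  "fo_within_ball m r = fo_conj [fo_dist_le (m + 1) r 0 j. j \<leftarrow> [0..<m]]"

definition fo_covers_ball :: "nat \<Rightarrow> nat \<Rightarrow> fo" where
  "fo_covers_ball m r =
     FNot (FEx m (FAnd (fo_dist_le (m + 1) r 0 m) (FNot (fo_disj [FEq m j. j \<leftarrow> [0..<m]]))))"

definition ball_iso_fo :: "graph \<Rightarrow> nat list \<Rightarrow> nat \<Rightarrow> fo" where
  "ball_iso_fo F ws r = fo_exs [1..<length ws]
     (FAnd (fo_distinct (length ws)) (FAnd (fo_adj_pattern F ws)
       (FAnd (fo_within_ball (length ws) r) (fo_covers_ball (length ws) r))))"

lemma sat_fo_distinct: "sat G \<tau> (fo_distinct m) \<longleftrightarrow> inj_on \<tau> {..<m}"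
  unfolding fo_distinct_def inj_on_def by fastforce

lemma sat_fo_adj_pattern: "sat G \<tau> (fo_adj_pattern F ws) \<longleftrightarrow>
    (\<forall>j<length ws. \<forall>k<length ws. adj G (\<tau> j) (\<tau> k) \<longleftrightarrow> adj F (ws ! j) (ws ! k))"
proof -
  have pairs: "sat G \<tau> (fo_conj [f j k. j \<leftarrow> [0..<m], k \<leftarrow> [0..<m]])
      \<longleftrightarrow> (\<forall>j<m. \<forall>k<m. sat G \<tau> (f j k))" for f m
    by auto
  show ?thesis unfolding fo_adj_pattern_def pairs by auto
qed

lemma sat_fo_within_ball:
  assumes "\<forall>j<m. \<tau> j \<in> verts G" "0 < m"
  shows "sat G \<tau> (fo_within_ball m r) \<longleftrightarrow> \<tau> ` {..<m} \<subseteq> ball G r (\<tau> 0)"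
proof -
  have "sat G \<tau> (fo_dist_le (m + 1) r 0 j) \<longleftrightarrow> \<tau> j \<in> ball G r (\<tau> 0)" if "j < m" for j
    using assms that by (intro sat_fo_dist_le) auto
  then show ?thesis unfolding fo_within_ball_def by auto
qed

lemma sat_fo_covers_ball:
  assumes "\<tau> 0 \<in> verts G" "0 < m"
  shows "sat G \<tau> (fo_covers_ball m r) \<longleftrightarrow> ball G r (\<tau> 0) \<subseteq> \<tau> ` {..<m}"
proof -
  have "sat G (\<tau>(m := u)) (fo_dist_le (m + 1) r 0 m) \<longleftrightarrow> u \<in> ball G r (\<tau> 0)"
    if "u \<in> verts G" for u
    using sat_fo_dist_le[of 0 "m + 1" m r "\<tau>(m := u)" G] assms that by simp
  then show ?thesis
    unfolding fo_covers_ball_def using ball_subset_verts[of G r "\<tau> 0"]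
    by (auto simp: atLeast0LessThan)
qed

lemma enumeration_if_rooted_iso:
  assumes ws: "distinct ws" "set ws = verts F" and B: "B \<subseteq> verts H" and x: "x \<in> B"
    and iso: "rooted_iso (induced H B) x F (ws ! 0)"
  obtains \<tau> where "\<tau> 0 = x" "bij_betw \<tau> {..<length ws} B"
    "\<forall>j<length ws. \<forall>k<length ws. adj H (\<tau> j) (\<tau> k) \<longleftrightarrow> adj F (ws ! j) (ws ! k)"
proof -
  obtain f where f: "bij_betw f B (verts F)" "f x = ws ! 0"
    "\<forall>a \<in> B. \<forall>b \<in> B. adj F (f a) (f b) \<longleftrightarrow> adj H a b"
    using iso B unfolding rooted_iso_def by (auto simp: Int_absorb1)
  define \<tau> where "\<tau> j = inv_into B f (ws ! j)" for j
  have \<tau>_bij: "bij_betw \<tau> {..<length ws} B"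
    unfolding \<tau>_def using bij_betw_trans[OF bij_betw_nth[OF ws(1) refl ws(2)[symmetric]]
        bij_betw_inv_into[OF f(1)]] by (simp add: o_def)
  have f\<tau>: "f (\<tau> j) = ws ! j" if "j < length ws" for j
    unfolding \<tau>_def using f(1) ws(2) that by (metis bij_betw_def f_inv_into_f nth_mem)
  have "\<tau> 0 = x" unfolding \<tau>_def using f x by (metis bij_betw_inv_into_left)
  moreover have "adj H (\<tau> j) (\<tau> k) \<longleftrightarrow> adj F (ws ! j) (ws ! k)" if "j < length ws" "k < length ws" for j k
  proof -
    have "\<tau> j \<in> B" "\<tau> k \<in> B" using bij_betwE[OF \<tau>_bij] that by auto
    then show ?thesis using f(3) f\<tau>[OF that(1)] f\<tau>[OF that(2)] by metis
  qed
  ultimately show ?thesis using that \<tau>_bij by blast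
qed

lemma rooted_iso_if_enumeration:
  assumes ws: "distinct ws" "set ws = verts F" "ws \<noteq> []" and B: "B \<subseteq> verts H"
    and \<tau>: "\<tau> 0 = x" "bij_betw \<tau> {..<length ws} B"
      "\<forall>j<length ws. \<forall>k<length ws. adj H (\<tau> j) (\<tau> k) \<longleftrightarrow> adj F (ws ! j) (ws ! k)"
  shows "rooted_iso (induced H B) x F (ws ! 0)"
proof -
  let ?m = "length ws" and ?\<tau>' = "inv_into {..<length ws} \<tau>"
  define f where "f = (!) ws \<circ> ?\<tau>'"
  have "bij_betw f B (verts F)"
    unfolding f_def using bij_betw_inv_into[OF \<tau>(2)] bij_betw_nth[OF ws(1) refl ws(2)[symmetric]]
    by (rule bij_betw_trans)
  moreover have "f x = ws ! 0"
    unfolding f_def using \<tau>(1,2) ws(3) by (metis bij_betw_inv_into_left comp_apply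
        length_greater_0_conv lessThan_iff)
  moreover have "adj F (f a) (f b) \<longleftrightarrow> adj H a b" if "a \<in> B" "b \<in> B" for a b
  proof -
    have "?\<tau>' a < ?m" "?\<tau>' b < ?m"
      using bij_betwE[OF bij_betw_inv_into[OF \<tau>(2)]] that by auto
    moreover have "\<tau> (?\<tau>' a) = a" "\<tau> (?\<tau>' b) = b"
      using \<tau>(2) that by (simp_all add: bij_betw_def f_inv_into_f)
    ultimately show ?thesis using \<tau>(3) unfolding f_def by (metis comp_apply)
  qed
  ultimately show ?thesis using B unfolding rooted_iso_def by (auto simp: Int_absorb1)
qed

lemma sat_ball_iso_fo:
  assumes ws: "distinct ws" "set ws = verts F" "ws \<noteq> []" and x: "\<sigma> 0 \<in> verts H"
  shows "sat H \<sigma> (ball_iso_fo F ws r) \<longleftrightarrow>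
    rooted_iso (induced H (ball H r (\<sigma> 0))) (\<sigma> 0) F (ws ! 0)"
proof -
  let ?m = "length ws" and ?B = "ball H r (\<sigma> 0)"
  let ?body = "FAnd (fo_distinct ?m) (FAnd (fo_adj_pattern F ws)
                 (FAnd (fo_within_ball ?m r) (fo_covers_ball ?m r)))"
  let ?enum = "\<lambda>\<tau>. \<tau> 0 = \<sigma> 0 \<and> bij_betw \<tau> {..<?m} ?B
        \<and> (\<forall>j<?m. \<forall>k<?m. adj H (\<tau> j) (\<tau> k) \<longleftrightarrow> adj F (ws ! j) (ws ! k))"
  have m: "0 < ?m" using ws(3) by simp
  have body: "sat H \<tau> ?body \<longleftrightarrow> ?enum \<tau>"
    if "\<forall>j<?m. \<tau> j \<in> verts H" "\<tau> 0 = \<sigma> 0" for \<tau>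
    using that m x sat_fo_within_ball[OF that(1) m] sat_fo_covers_ball[of \<tau> H ?m r]
    by (auto simp: sat_fo_distinct sat_fo_adj_pattern bij_betw_def)
  have "sat H \<sigma> (ball_iso_fo F ws r) \<longleftrightarrow> (\<exists>\<tau>. ?enum \<tau>)"
  proof
    assume "sat H \<sigma> (ball_iso_fo F ws r)"
    then obtain \<tau> where \<tau>: "\<forall>y. y \<notin> {1..<?m} \<longrightarrow> \<tau> y = \<sigma> y" "\<forall>y \<in> {1..<?m}. \<tau> y \<in> verts H"
      "sat H \<tau> ?body"
      unfolding ball_iso_fo_def sat_fo_exs by auto
    moreover have "\<forall>j<?m. \<tau> j \<in> verts H" using \<tau>(1,2) x by (metis atLeastLessThan_iff less_one
          not_less)
    ultimately show "\<exists>\<tau>. ?enum \<tau>" using body by auto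
  next
    assume "\<exists>\<tau>. ?enum \<tau>"
    then obtain \<tau> where \<tau>: "?enum \<tau>" by blast
    define \<tau>' where "\<tau>' y = (if y \<in> {1..<?m} then \<tau> y else \<sigma> y)" for y
    have eq: "\<tau>' j = \<tau> j" if "j < ?m" for j using \<tau> that by (cases j) (auto simp: \<tau>'_def)
    then have "?enum \<tau>'" using \<tau> m bij_betw_cong[of "{..<?m}" \<tau>' \<tau>] by auto
    moreover have "\<forall>j<?m. \<tau>' j \<in> verts H"
      using eq \<tau> bij_betwE ball_subset_verts by (metis lessThan_iff subsetD)
    ultimately have "sat H \<tau>' ?body" using body by (simp add: \<tau>'_def)
    then show "sat H \<sigma> (ball_iso_fo F ws r)"
      unfolding ball_iso_fo_def sat_fo_exs using \<open>\<forall>j<?m. \<tau>' j \<in> verts H\<close>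
      by (intro exI[of _ \<tau>']) (auto simp: \<tau>'_def)
  qed
  also have "\<dots> \<longleftrightarrow> rooted_iso (induced H ?B) (\<sigma> 0) F (ws ! 0)"
    using enumeration_if_rooted_iso[OF ws(1,2) ball_subset_verts center_in_ball[OF x]]
      rooted_iso_if_enumeration[OF ws ball_subset_verts] by metis
  finally show ?thesis .
qed

lemma free_vars_ball_iso_fo: "ws \<noteq> [] \<Longrightarrow> free_vars (ball_iso_fo F ws r) \<subseteq> {0..<1}"
  using free_vars_fo_conj free_vars_fo_disj free_vars_fo_dist_le
  by (fastforce simp: ball_iso_fo_def fo_distinct_def fo_adj_pattern_def fo_within_ball_def
      fo_covers_ball_def split: if_splits)

lemma ball_iso_fo_local:
  assumes ws: "distinct ws" "set ws = verts F" "ws \<noteq> []"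
  shows "r_local 1 r (ball_iso_fo F ws r)"
  unfolding r_local_def
proof (intro allI impI)
  fix G and v :: "nat \<Rightarrow> nat" assume "is_graph G" and v: "v \<in> {0..<1} \<rightarrow>\<^sub>E verts G"
  let ?H = "induced G (ball G r (v 0))"
  have x: "v 0 \<in> verts G" by (rule PiE_mem[OF v]) simp
  then have "v 0 \<in> verts ?H" using center_in_ball[OF x] by simp
  then have "sat ?H v (ball_iso_fo F ws r) \<longleftrightarrow> sat G v (ball_iso_fo F ws r)"
    using sat_ball_iso_fo[OF ws, where \<sigma> = v and H = G, OF x]
      sat_ball_iso_fo[OF ws, where \<sigma> = v and H = ?H] by simp
  moreover have "nbhd G r 1 v = ball G r (v 0)" by (simp add: nbhd_def lessThan_Suc)
  ultimately show "sat G v (ball_iso_fo F ws r) \<longleftrightarrow> sat (induced G (nbhd G r 1 v)) v (ball_iso_fo F ws r)"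
    by simp
qed

lemma density_1_eq:
  assumes "\<And>v :: nat \<Rightarrow> nat. v \<in> {0..<1} \<rightarrow>\<^sub>E verts G \<Longrightarrow> sat G v \<psi> \<longleftrightarrow> Q (v 0)"
  shows "density 1 \<psi> G = real (card {x \<in> verts G. Q x}) / real (card (verts G))"
proof -
  have "bij_betw (\<lambda>v. v 0) {v \<in> {0..<1} \<rightarrow>\<^sub>E verts G. sat G v \<psi>} {x \<in> verts G. Q x}"
  proof (rule bij_betw_byWitness[where f' = "\<lambda>x. \<lambda>i\<in>{0..<1}. x"])
    show "\<forall>v \<in> {v \<in> {0..<1} \<rightarrow>\<^sub>E verts G. sat G v \<psi>}. (\<lambda>i\<in>{0..<1}. v 0) = v"
      by (auto simp: PiE_iff extensional_def fun_eq_iff)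
    show "(\<lambda>x. \<lambda>i\<in>{0..<1}. x) ` {x \<in> verts G. Q x} \<subseteq> {v \<in> {0..<1} \<rightarrow>\<^sub>E verts G. sat G v \<psi>}"
    proof (rule image_subsetI)
      fix x assume x: "x \<in> {x \<in> verts G. Q x}"
      then have "(\<lambda>i\<in>{0..<1}. x) \<in> {0..<1} \<rightarrow>\<^sub>E verts G" by simp
      then show "(\<lambda>i\<in>{0..<1}. x) \<in> {v \<in> {0..<1} \<rightarrow>\<^sub>E verts G. sat G v \<psi>}"
        using assms x by simp
    qed
  qed (use assms in auto)
  then show ?thesis unfolding density_def by (simp add: bij_betw_same_card)
qed

lemma BS_convergent_if_FO_local1_convergent:
  assumes conv: "FO_local1_convergent Gs"
  shows "BS_convergent d Gs"
  unfolding BS_convergent_def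
proof (intro allI impI)
  fix r F o' assume "is_graph F \<and> o' \<in> verts F \<and> connected_graph F \<and> max_degree_le d F"
  then have F: "finite (verts F)" and o: "o' \<in> verts F" by (auto simp: is_graph_def)
  define ws where "ws = o' # sorted_list_of_set (verts F - {o'})"
  have ws: "distinct ws" "set ws = verts F" "ws \<noteq> []" and "ws ! 0 = o'"
    unfolding ws_def using F o by auto
  have "ball_iso_fo F ws r \<in> FO_local_p 1"
    unfolding FO_local_p_def using free_vars_ball_iso_fo[OF ws(3)] ball_iso_fo_local[OF ws] by blast
  then have "convergent (\<lambda>n. density 1 (ball_iso_fo F ws r) (Gs n))"
    using conv unfolding FO_local1_convergent_def by blast
  moreover have "density 1 (ball_iso_fo F ws r) (Gs n) =
      real (card {v \<in> verts (Gs n). rooted_iso (induced (Gs n) (ball (Gs n) r v)) v F o'})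
      / real (card (verts (Gs n)))" for n
  proof (rule density_1_eq)
    fix v :: "nat \<Rightarrow> nat" assume v: "v \<in> {0..<1} \<rightarrow>\<^sub>E verts (Gs n)"
    have "v 0 \<in> verts (Gs n)" by (rule PiE_mem[OF v]) simp
    then show "sat (Gs n) v (ball_iso_fo F ws r) \<longleftrightarrow>
        rooted_iso (induced (Gs n) (ball (Gs n) r (v 0))) (v 0) F o'"
      using sat_ball_iso_fo[OF ws] \<open>ws ! 0 = o'\<close> by simp
  qed
  ultimately show "convergent (\<lambda>n. real (card {v \<in> verts (Gs n).
      rooted_iso (induced (Gs n) (ball (Gs n) r v)) v F o'}) / real (card (verts (Gs n))))"
    by simp
qed

theorem theorem4p5:
  fixes d :: nat and Gs :: "nat \<Rightarrow> graph"
  assumes "\<And>n. is_graph (Gs n)"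
    and "\<And>n. max_degree_le d (Gs n)"
    and "filterlim (\<lambda>n. card (verts (Gs n))) at_top sequentially"
  shows "(BS_convergent d Gs \<longleftrightarrow> FO_local1_convergent Gs)
       \<and> (FO_local1_convergent Gs \<longleftrightarrow> FO_local_convergent Gs)"
proof -
  have "BS_convergent d Gs \<Longrightarrow> FO_local_convergent Gs"
    unfolding FO_local_convergent_def using FO_local_density_convergent[OF assms] by blast
  moreover have "FO_local_convergent Gs \<Longrightarrow> FO_local1_convergent Gs"
    unfolding FO_local_convergent_def FO_local1_convergent_def by blast
  moreover have "FO_local1_convergent Gs \<Longrightarrow> BS_convergent d Gs"
    by (rule BS_convergent_if_FO_local1_convergent)
  ultimately show ?thesis by blast
qed

end
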